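(* Let $\bar u\in\mathbb{R}^n_{\ge 0}$, $\mathcal{X}=[0,\bar u]$, and let $f:\mathcal{X}\to\mathbb{R}$ be differentiable, nonnegative, DR-submodular and $\mu$-strongly DR-submodular for some $\mu\ge0$. Let $\mathcal{P}\subseteq\mathcal{X}$ be a nonempty compact convex down-closed set and let $x^*\in\arg\max_{x\in\mathcal{P}}f(x)$. Let $x\in\mathcal{P}$, let $\mathcal{Q}:=\{y\in\mathcal{P}: y\le \bar u-x\}$, and let $z\in\mathcal{Q}$. Define $z^*:=x\vee x^*-x$. Then $$\max\{f(x),f(z)\}\;\ge\;\frac14\big[f(x^* )-g_{\mathcal{P}}(x)-g_{\mathcal{Q}}(z)\big]+\frac{\mu}{8}\big(\|x-x^*\|^2+\|z-z^*\|^2\big).$$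
   Context: Vector inequalities are componentwise; $\vee,\wedge$ are coordinatewise max/min; $\|\cdot\|$ is the Euclidean norm. A set $\mathcal{P}\subseteq[0,\bar u]$ is down-closed if $x\in\mathcal{P}$ and $0\le y\le x$ imply $y\in\mathcal{P}$. DR-submodular: for all $a\le b$ in $\mathcal{X}$, $i\in[n]$, $k\ge0$ with $a+ke_i,b+ke_i\in\mathcal{X}$, $f(a+ke_i)-f(a)\ge f(b+ke_i)-f(b)$. $\mu$-strongly DR-submodular: for all $x\in\mathcal{X}$ and $v\in\mathbb{R}^n_{\ge0}\cup(-\mathbb{R}^n_{\ge0})$ with $x+v\in\mathcal{X}$, $f(x+v)\le f(x)+\langle\nabla f(x),v\rangle-\frac{\mu}{2}\|v\|^2$. For a compact set $\mathcal{C}\subseteq\mathcal{X}$ and $w\in\mathcal{C}$, the non-stationarity is $g_{\mathcal{C}}(w):=\max_{v\in\mathcal{C}}\langle v-w,\nabla f(w)\rangle$. *)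

theory Defs
  imports "HOL-Analysis.Analysis"
begin

(* Vectors in R^n are rendered as real^'n; \<le> on real^'n is componentwise,
   sup/inf are coordinatewise max/min, norm is Euclidean. *)

definition down_closed :: "(real^'n) set \<Rightarrow> bool" where
  "down_closed P \<longleftrightarrow> (\<forall>x\<in>P. \<forall>y. 0 \<le> y \<and> y \<le> x \<longrightarrow> y \<in> P)"

definition DR_submodular :: "(real^'n) set \<Rightarrow> (real^'n \<Rightarrow> real) \<Rightarrow> bool" where
  "DR_submodular X f \<longleftrightarrow>
     (\<forall>a\<in>X. \<forall>b\<in>X. \<forall>i. \<forall>k::real. a \<le> b \<and> k \<ge> 0 \<and>
        a + k *\<^sub>R axis i 1 \<in> X \<and> b + k *\<^sub>R axis i 1 \<in> X \<longrightarrow>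
        f (a + k *\<^sub>R axis i 1) - f a \<ge> f (b + k *\<^sub>R axis i 1) - f b)"

(* grad is the gradient \<nabla>f *)
definition strongly_DR_submodular ::
  "real \<Rightarrow> (real^'n) set \<Rightarrow> (real^'n \<Rightarrow> real) \<Rightarrow> (real^'n \<Rightarrow> real^'n) \<Rightarrow> bool" where
  "strongly_DR_submodular \<mu> X f grad \<longleftrightarrow>
     (\<forall>x\<in>X. \<forall>v. (0 \<le> v \<or> v \<le> 0) \<and> x + v \<in> X \<longrightarrow>
        f (x + v) \<le> f x + inner (grad x) v - \<mu> / 2 * (norm v)\<^sup>2)"

definition nonstat :: "(real^'n \<Rightarrow> real^'n) \<Rightarrow> (real^'n) set \<Rightarrow> real^'n \<Rightarrow> real" where
  "nonstat grad C w = (SUP v\<in>C. inner (v - w) (grad w))"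

end

theory Submission
  imports Defs
begin

text \<open>Write \<open>z\<^sup>* = x \<squnion> x\<^sup>* - x\<close>, so that \<open>x \<sqinter> x\<^sup>* + z\<^sup>* = x\<^sup>*\<close> and \<open>x + z\<^sup>* = x \<squnion> x\<^sup>*\<close>.
  Applying diminishing returns twice to the increment \<open>z \<squnion> z\<^sup>*\<close> and using \<open>f \<ge> 0\<close> gives
  \<open>f(x\<^sup>*) \<le> f(x \<sqinter> x\<^sup>*) + f(x \<squnion> x\<^sup>*) + f(z \<squnion> z\<^sup>*)\<close>.
  Strong DR-submodularity along the nonnegative and the nonpositive part of \<open>y - p\<close>, which
  are orthogonal, bounds \<open>f(p \<squnion> y) + f(p \<sqinter> y)\<close> by \<open>2 f(p) + \<langle>\<nabla>f(p), y - p\<rangle> - \<mu>/2 \<parallel>p - y\<parallel>\<^sup>2\<close>.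
  Summing this bound for \<open>(p, y) = (x, x\<^sup>*)\<close> and \<open>(p, y) = (z, z\<^sup>*)\<close>, where \<open>z\<^sup>* \<in> \<Q>\<close> by
  down-closedness, and bounding the linear terms by the non-stationarities yields the claim.\<close>

lemma DR_submodular_diff_antimono:
  fixes f :: "real^'n \<Rightarrow> real"
  assumes DR: "DR_submodular {0..u} f"
    and a0: "0 \<le> a" and ab: "a \<le> b" and v0: "0 \<le> v" and bu: "b + v \<le> u"
  shows "f (b + v) - f b \<le> f (a + v) - f a"
proof -
  \<comment> \<open>add the increment one coordinate at a time\<close>
  define vS where "vS S = (\<chi> i. if i \<in> S then v$i else 0)" for S :: "'n set"
  have mem: "p \<in> {0..u}" if "a \<le> p" "p \<le> b + v" for p
    using that a0 bu by (auto simp: less_eq_vec_def intro: order_trans)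
  have "f (b + vS S) - f b \<le> f (a + vS S) - f a" if "finite S" for S
    using that
  proof (induction S rule: finite_induct)
    case empty
    have "vS {} = 0" by (simp add: vS_def vec_eq_iff)
    then show ?case by simp
  next
    case (insert i S)
    let ?a = "a + vS S" and ?b = "b + vS S" and ?e = "(v$i) *\<^sub>R axis i (1::real)"
    have split: "vS (insert i S) = vS S + ?e"
      using insert by (auto simp: vS_def vec_eq_iff axis_def)
    have bounds: "a \<le> ?a" "?a \<le> ?b" "a \<le> ?b" "a \<le> ?a + ?e" "a \<le> ?b + ?e"
      "?a \<le> b + v" "?b \<le> b + v" "?a + ?e \<le> b + v" "?b + ?e \<le> b + v"
      using ab v0 insert(2)
      by (auto simp: less_eq_vec_def vS_def axis_def intro: add_increasing2)
    have "f (?b + ?e) - f ?b \<le> f (?a + ?e) - f ?a"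
      apply (rule DR[unfolded DR_submodular_def, rule_format, of ?a ?b "v$i" i])
      using bounds v0 by (auto simp: less_eq_vec_def intro!: mem simp del: atLeastAtMost_iff)
    then show ?case using insert(3) by (simp add: split add.assoc)
  qed
  moreover have "vS UNIV = v" by (simp add: vS_def vec_eq_iff)
  ultimately show ?thesis by (metis finite)
qed

lemma sup_diff_add_inf_diff:
  fixes p y :: "real^'n"
  shows "(sup p y - p) + (inf p y - p) = y - p"
  by (simp add: vec_eq_iff sup_vec_def inf_vec_def sup_max inf_min max_def min_def)

lemma orthogonal_sup_diff_inf_diff:
  fixes p y :: "real^'n"
  shows "orthogonal (sup p y - p) (inf p y - p)"
  by (auto simp: orthogonal_def inner_vec_def sup_vec_def inf_vec_def sup_max inf_min max_def min_def
      intro!: sum.neutral)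

lemma strongly_DR_submodular_sup_inf_le:
  fixes f :: "real^'n \<Rightarrow> real"
  assumes strong: "strongly_DR_submodular \<mu> {0..u} f grad"
    and p: "p \<in> {0..u}" and y: "y \<in> {0..u}"
  shows "f (sup p y) + f (inf p y)
           \<le> 2 * f p + inner (grad p) (y - p) - \<mu>/2 * (norm (p - y))\<^sup>2"
proof -
  define v1 where "v1 = sup p y - p"
  define v2 where "v2 = inf p y - p"
  have "0 \<le> v1" "p + v1 \<in> {0..u}" using p y
    by (auto simp: v1_def less_eq_vec_def sup_vec_def le_supI1)
  then have up: "f (sup p y) \<le> f p + inner (grad p) v1 - \<mu>/2 * (norm v1)\<^sup>2"
    using strong p unfolding strongly_DR_submodular_def v1_def
    by (metis add.commute diff_add_cancel)
  have "v2 \<le> 0" "p + v2 \<in> {0..u}" using p y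
    by (auto simp: v2_def less_eq_vec_def inf_vec_def le_infI1)
  then have down: "f (inf p y) \<le> f p + inner (grad p) v2 - \<mu>/2 * (norm v2)\<^sup>2"
    using strong p unfolding strongly_DR_submodular_def v2_def
    by (metis add.commute diff_add_cancel)
  have sum: "v1 + v2 = y - p"
    unfolding v1_def v2_def by (rule sup_diff_add_inf_diff)
  have "(norm (p - y))\<^sup>2 = (norm (v1 + v2))\<^sup>2"
    by (simp add: sum norm_minus_commute)
  also have "\<dots> = (norm v1)\<^sup>2 + (norm v2)\<^sup>2"
    by (rule norm_add_Pythagorean) (simp add: v1_def v2_def orthogonal_sup_diff_inf_diff)
  finally have pythagoras: "(norm (p - y))\<^sup>2 = (norm v1)\<^sup>2 + (norm v2)\<^sup>2" .
  have "inner (grad p) (y - p) = inner (grad p) v1 + inner (grad p) v2"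
    by (simp add: sum[symmetric] inner_add_right)
  with up down pythagoras show ?thesis by (simp add: algebra_simps)
qed

lemma DR_submodular_le_inf_add_sup:
  fixes f :: "real^'n \<Rightarrow> real"
  assumes DR: "DR_submodular {0..u} f" and nonneg: "\<forall>y\<in>{0..u}. 0 \<le> f y"
    and x: "x \<in> {0..u}" and y: "y \<in> {0..u}"
    and w_ge: "sup x y - x \<le> w" and xw: "x + w \<le> u"
  shows "f y \<le> f (inf x y) + f w + f (sup x y)"
proof -
  define m where "m = inf x y"
  define d where "d = sup x y - x"
  have m0: "0 \<le> m" and mx: "m \<le> x" using x y
    by (auto simp: m_def less_eq_vec_def inf_vec_def inf_min)
  have d0: "0 \<le> d" by (auto simp: d_def less_eq_vec_def sup_vec_def sup_max)
  have md: "m + d = y"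
    by (simp add: m_def d_def vec_eq_iff sup_vec_def inf_vec_def sup_max inf_min max_def min_def)
  have w0: "0 \<le> w" using d0 w_ge unfolding d_def by (rule order_trans)
  have "m + w \<le> u" using order_trans[OF add_right_mono[OF mx] xw] .
  then have "f (m + w) - f m \<le> f w - f 0"
    using DR_submodular_diff_antimono[OF DR order_refl m0 w0] by simp
  moreover have "f (x + w) - f (sup x y) \<le> f (m + w) - f y"
  proof -
    have "f (x + d + (w - d)) - f (x + d) \<le> f (m + d + (w - d)) - f (m + d)"
      by (rule DR_submodular_diff_antimono[OF DR])
        (use m0 d0 mx w_ge xw in \<open>simp_all add: d_def add_right_mono add.commute[of w x]\<close>)
    moreover have "m + d + (w - d) = m + w" "x + d + (w - d) = x + w" "x + d = sup x y"
      by (simp_all add: d_def)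
    ultimately show ?thesis by (simp only: md)
  qed
  moreover have "0 \<le> f 0"
    using nonneg x by (meson atLeastAtMost_iff order_refl order_trans)
  moreover have "0 \<le> f (x + w)"
    using nonneg x w0 xw by (simp add: add_nonneg_nonneg)
  ultimately show ?thesis by (simp add: m_def)
qed

lemma inner_le_nonstat:
  fixes grad :: "real^'n \<Rightarrow> real^'n"
  assumes "compact C" and "v \<in> C"
  shows "inner (grad w) (v - w) \<le> nonstat grad C w"
proof -
  have "bdd_above ((\<lambda>v. inner (v - w) (grad w)) ` C)"
    by (intro bounded_imp_bdd_above compact_imp_bounded compact_continuous_image
        assms(1) continuous_intros)
  then have "inner (v - w) (grad w) \<le> (SUP v\<in>C. inner (v - w) (grad w))"
    using assms(2) by (rule cSUP_upper2) simp
  then show ?thesis by (simp add: nonstat_def inner_commute)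
qed

theorem proposition1:
  fixes ubar :: "real^'n"
    and f :: "real^'n \<Rightarrow> real"
    and grad :: "real^'n \<Rightarrow> real^'n"
    and \<mu> :: real
    and P :: "(real^'n) set"
    and xstar x z :: "real^'n"
  assumes ubar_nonneg: "0 \<le> ubar"
    and diff: "\<forall>y\<in>{0..ubar}. (f has_derivative (\<lambda>v. inner (grad y) v)) (at y within {0..ubar})"
    and nonneg: "\<forall>y\<in>{0..ubar}. f y \<ge> 0"
    and DR: "DR_submodular {0..ubar} f"
    and mu_nonneg: "\<mu> \<ge> 0"
    and strong: "strongly_DR_submodular \<mu> {0..ubar} f grad"
    and P_sub: "P \<subseteq> {0..ubar}"
    and P_ne: "P \<noteq> {}"
    and P_compact: "compact P"
    and P_convex: "convex P"
    and P_down: "down_closed P"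
    and xstar_in: "xstar \<in> P"
    and xstar_max: "\<forall>y\<in>P. f y \<le> f xstar"
    and x_in: "x \<in> P"
    and z_in: "z \<in> {y\<in>P. y \<le> ubar - x}"
  shows "max (f x) (f z) \<ge>
           1/4 * (f xstar - nonstat grad P x - nonstat grad {y\<in>P. y \<le> ubar - x} z)
           + \<mu>/8 * ((norm (x - xstar))\<^sup>2 + (norm (z - (sup x xstar - x)))\<^sup>2)"
proof -
  define Q where "Q = {y\<in>P. y \<le> ubar - x}"
  define zs where "zs = sup x xstar - x"
  have x: "x \<in> {0..ubar}" and xstar: "xstar \<in> {0..ubar}" and z: "z \<in> {0..ubar}"
    using x_in xstar_in z_in P_sub by auto
  have "0 \<le> zs" "zs \<le> xstar" "zs \<le> ubar - x"
    using x xstar by (auto simp: zs_def less_eq_vec_def sup_vec_def sup_max max_def)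
  then have zs_Q: "zs \<in> Q"
    using P_down xstar_in unfolding down_closed_def Q_def by blast
  then have zs: "zs \<in> {0..ubar}" using P_sub Q_def by auto
  have "Q = P \<inter> {y. \<forall>i. y$i \<le> (ubar - x)$i}" by (auto simp: Q_def less_eq_vec_def)
  then have "compact Q" using P_compact closed_interval_left_cart compact_Int_closed by metis
  then have grad_z: "inner (grad z) (zs - z) \<le> nonstat grad Q z"
    using inner_le_nonstat zs_Q by blast
  have grad_x: "inner (grad x) (xstar - x) \<le> nonstat grad P x"
    using inner_le_nonstat P_compact xstar_in by blast
  have "sup z zs \<le> ubar - x" using z_in zs_Q by (simp add: Q_def)
  then have "x + sup z zs \<le> ubar" by (simp add: le_diff_eq add.commute)
  then have "f xstar \<le> f (inf x xstar) + f (sup z zs) + f (sup x xstar)"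
    using DR_submodular_le_inf_add_sup[OF DR nonneg x xstar] by (simp add: zs_def)
  moreover have "0 \<le> f (inf z zs)"
    using nonneg z zs by (auto simp: less_eq_vec_def inf_vec_def inf_min min.coboundedI1)
  moreover note strongly_DR_submodular_sup_inf_le[OF strong x xstar]
    strongly_DR_submodular_sup_inf_le[OF strong z zs]
  ultimately show ?thesis
    using grad_x grad_z unfolding Q_def[symmetric] zs_def[symmetric]
    by (simp add: field_simps)
qed

end
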